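(* Suppose (G1) and (G2) hold: for all $P\in\mathbf P$, $P\ll\lambda$, $\Omega(P)$ is compact, $\sup_P\sup_{v\in\Omega(P)}\frac{dP}{d\lambda}(v)<\infty$, $\inf_P\inf_{v\in\Omega(P)}\frac{dP}{d\lambda}(v)>0$; and for each $P$ there is a continuously differentiable bijection $T_P:[0,1]^{d_v}\to\Omega(P)$ with $\inf_P\inf_v|JT_P(v)|>0$ and $\sup_P\sup_v\|T_P'(v)\|_{o,2}<\infty$. For each $P\in\mathbf P$ let $\{\Delta_i(P)\}_{i\ge0}$ be a sequence of partitions of $\Omega(P)$ with the properties: $\Delta_i(P)=\{\Delta_{i,k}(P):0\le k\le 2^i-1\}$ consists of $P$-measurable sets with $\Delta_{0,0}(P)=\Omega(P)$; $\Delta_{i,k}(P)$ is the disjoint union of $\Delta_{i+1,2k}(P)$ and $\Delta_{i+1,2k+1}(P)$; $P(\Delta_{i,k}(P))=2^{-i}$; $\sup_{P}\max_k\sup_{v,v'\in\Delta_{i,k}(P)}\|v-v'\|_2=O(2^{-i/d_v})$; and the completed $\sigma$-algebra generated by $\bigcup_i\Delta_i(P)$ is the $P$-completion of the Borel $\sigma$-algebra (such sequences exist). Let $\mathcal B_{P,i}$ denote the $\sigma$-algebra generated by $\Delta_i(P)$. Then there are constants $K_0>0$, $K_1>0$ such that for all $P\in\mathbf P$, all $i\ge0$, and any $f$ with $f\in L^2_P$ for all $P\in\mathbf P$, $$E_P[(f(V)-E_P[f(V)\mid\mathcal B_{P,i}])^2]\le K_0\times\varpi^2(f,K_1\times2^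{-i/d_v},P).$$
   Context: $V\in\mathbf R^{d_v}$ has distribution $P\in\mathbf P$ with support $\Omega(P)$; $\lambda$ is Lebesgue measure; $JT_P$ is the Jacobian determinant, $T_P'$ the derivative. The integral modulus of continuity is $\varpi(f,h,P)\equiv\sup_{\|s\|\le h}\big(\int_{\Omega(P)}(f(v+s)-f(v))^21\{v+s\in\Omega(P)\}d\lambda(v)\big)^{1/2}$. *)

theory Defs
  imports "HOL-Probability.Probability"
begin

definition supp :: "('a::metric_space) measure \<Rightarrow> 'a set" where
  "supp P = {v. \<forall>e>0. emeasure P (ball v e) > 0}"

text \<open>Squared integral modulus of continuity (the square of the paper's varpi(f,h,P)):
  sup over norm s \<le> h of the Lebesgue integral over supp P of (f(v+s)-f(v))^2 1{v+s in supp P}.\<close>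
definition int_mod_sq ::
  "('a::euclidean_space \<Rightarrow> real) \<Rightarrow> real \<Rightarrow> 'a measure \<Rightarrow> ennreal" where
  "int_mod_sq f h P =
     (SUP s \<in> {s. norm s \<le> h}.
        \<integral>\<^sup>+ v. ennreal ((f (v + s) - f v)\<^sup>2) * indicator (supp P \<inter> {v. v + s \<in> supp P}) v \<partial>lborel)"

definition completed_sigma :: "'a measure \<Rightarrow> 'a set set \<Rightarrow> 'a set set" where
  "completed_sigma P S =
     {A. \<exists>B \<in> sigma_sets (space P) S. \<exists>N \<in> null_sets P. (A - B) \<union> (B - A) \<subseteq> N}"

end

theory Submission
  imports Defs
begin

text \<open>
  The conditional expectation given the \<sigma>-algebra of a partition is the best
  approximation of \<open>f\<close> in \<open>L\<^sup>2\<close> by functions measurable for it, so its error is at most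
  that of the step function of cell averages. On a cell \<open>D\<close> of mass \<open>m\<close> the latter error is
  \<open>1/(2m)\<close> times the integral of \<open>(f x - f y)\<^sup>2\<close> over \<open>D \<times> D\<close>. The \<open>2^i\<close> cells of level \<open>i\<close>
  are disjoint, have mass \<open>2^-i\<close> and diameter at most \<open>h = K\<^sub>1 2^(-i/d)\<close> (on the finitely many
  coarse levels because the support is a Lipschitz image of the unit cube), so the sum over
  the cells is at most the integral of \<open>(f x - f y)\<^sup>2\<close> over pairs of support points at
  distance \<open>\<le> h\<close>. Bounding the density by \<open>C\<close> and substituting \<open>y = x + s\<close> bounds this by
  \<open>C\<^sup>2 vol(B\<^sub>h) \<varpi>\<^sup>2(f, h, P)\<close>, and \<open>2^i vol(B\<^sub>h) \<le> 2^i (2h)^d = (2K\<^sub>1)^d\<close> does not depend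
  on \<open>i\<close>.
\<close>

section \<open>Conditional expectation as best \<open>L\<^sup>2\<close> approximation\<close>

lemma integrable_mult_of_square_integrable:
  fixes f g :: "'a \<Rightarrow> real"
  assumes "f \<in> borel_measurable M" "g \<in> borel_measurable M"
    and "integrable M (\<lambda>x. (f x)\<^sup>2)" "integrable M (\<lambda>x. (g x)\<^sup>2)"
  shows "integrable M (\<lambda>x. f x * g x)"
proof (rule Bochner_Integration.integrable_bound[where f="\<lambda>x. (f x)\<^sup>2 + (g x)\<^sup>2"])
  have "\<bar>f x * g x\<bar> \<le> (f x)\<^sup>2 + (g x)\<^sup>2" for x
  proof -
    have "2 * \<bar>f x\<bar> * \<bar>g x\<bar> \<le> \<bar>f x\<bar>\<^sup>2 + \<bar>g x\<bar>\<^sup>2" by (rule sum_squares_bound)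
    moreover have "0 \<le> \<bar>f x\<bar> * \<bar>g x\<bar>" by simp
    ultimately show ?thesis unfolding abs_mult power2_abs by linarith
  qed
  then show "AE x in M. norm (f x * g x) \<le> norm ((f x)\<^sup>2 + (g x)\<^sup>2)"
    by simp
qed (use assms in auto)

lemma integrable_square_diff:
  fixes f g :: "'a \<Rightarrow> real"
  assumes "f \<in> borel_measurable M" "g \<in> borel_measurable M"
    and "integrable M (\<lambda>x. (f x)\<^sup>2)" "integrable M (\<lambda>x. (g x)\<^sup>2)"
  shows "integrable M (\<lambda>x. (f x - g x)\<^sup>2)"
proof -
  have "(\<lambda>x. (f x - g x)\<^sup>2) = (\<lambda>x. (f x)\<^sup>2 - 2 * (f x * g x) + (g x)\<^sup>2)"
    by (simp add: power2_diff algebra_simps)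
  then show ?thesis
    using assms integrable_mult_of_square_integrable[OF assms] by simp
qed

lemma (in sigma_finite_subalgebra) real_cond_exp_L2_optimal:
  fixes f g :: "'a \<Rightarrow> real"
  assumes f[measurable]: "integrable M f" "integrable M (\<lambda>x. (f x)\<^sup>2)"
    and g[measurable]: "g \<in> borel_measurable F" and g2: "integrable M (\<lambda>x. (g x)\<^sup>2)"
  shows "(\<integral>x. (f x - real_cond_exp M F f x)\<^sup>2 \<partial>M) \<le> (\<integral>x. (f x - g x)\<^sup>2 \<partial>M)"
proof -
  define c where "c = real_cond_exp M F f"
  define e where "e x = c x - g x" for x
  have [measurable]: "c \<in> borel_measurable M" "g \<in> borel_measurable M"
    unfolding c_def using measurable_from_subalg[OF subalg g] by auto
  have eF: "e \<in> borel_measurable F"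
    unfolding e_def c_def using g by measurable
  have c2: "integrable M (\<lambda>x. (c x)\<^sup>2)"
    unfolding c_def by (rule integrable_convex_cond_exp[of f UNIV]) (auto simp: f convex_power2)
  have e2: "integrable M (\<lambda>x. (e x)\<^sup>2)"
    unfolding e_def by (rule integrable_square_diff) (auto simp: c2 g2)
  have ef: "integrable M (\<lambda>x. e x * f x)" and ec: "integrable M (\<lambda>x. e x * c x)"
    using e2 f c2 by (auto intro!: integrable_mult_of_square_integrable simp: e_def)
  have fc2: "integrable M (\<lambda>x. (f x - c x)\<^sup>2)"
    by (rule integrable_square_diff) (auto simp: c2 f)
  \<comment> \<open>\<open>f - c\<close> is orthogonal to the \<open>F\<close>-measurable \<open>e\<close>\<close>
  have orth: "(\<integral>x. e x * c x \<partial>M) = (\<integral>x. e x * f x \<partial>M)"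
    unfolding c_def using real_cond_exp_intg(2)[OF ef eF] by simp
  have "(\<lambda>x. (f x - g x)\<^sup>2) = (\<lambda>x. (f x - c x)\<^sup>2 + 2 * (e x * f x - e x * c x) + (e x)\<^sup>2)"
    by (auto simp: e_def power2_eq_square algebra_simps)
  then have "(\<integral>x. (f x - g x)\<^sup>2 \<partial>M)
      = (\<integral>x. (f x - c x)\<^sup>2 \<partial>M) + 2 * ((\<integral>x. e x * f x \<partial>M) - (\<integral>x. e x * c x \<partial>M)) + (\<integral>x. (e x)\<^sup>2 \<partial>M)"
    using fc2 ef ec e2 by simp
  also have "\<dots> \<ge> (\<integral>x. (f x - c x)\<^sup>2 \<partial>M)"
    using orth by simp
  finally show ?thesis unfolding c_def .
qed

section \<open>Dyadic partitions\<close>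

lemma dyadic_cell_subset_parent:
  fixes D :: "nat \<Rightarrow> nat \<Rightarrow> 'a set"
  assumes split: "\<And>i k. k < 2 ^ i \<Longrightarrow> D i k = D (Suc i) (2 * k) \<union> D (Suc i) (2 * k + 1)"
    and j: "j < 2 ^ Suc i"
  shows "D (Suc i) j \<subseteq> D i (j div 2)"
proof -
  have "j div 2 < 2 ^ i" using j by auto
  then have "D i (j div 2) = D (Suc i) (2 * (j div 2)) \<union> D (Suc i) (2 * (j div 2) + 1)"
    by (rule split)
  moreover have "j = 2 * (j div 2) \<or> j = 2 * (j div 2) + 1" by presburger
  ultimately show ?thesis by (metis Un_upper1 Un_upper2)
qed

lemma dyadic_cell_subset_root:
  fixes D :: "nat \<Rightarrow> nat \<Rightarrow> 'a set"
  assumes root: "D 0 0 = S"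
    and split: "\<And>i k. k < 2 ^ i \<Longrightarrow> D i k = D (Suc i) (2 * k) \<union> D (Suc i) (2 * k + 1)"
  shows "k < 2 ^ i \<Longrightarrow> D i k \<subseteq> S"
proof (induction i arbitrary: k)
  case 0
  then show ?case using root by simp
next
  case (Suc i)
  then have "D i (k div 2) \<subseteq> S" by (intro Suc.IH) auto
  then show ?case using dyadic_cell_subset_parent[where D=D, OF split Suc.prems] by blast
qed

lemma dyadic_cells_disjoint:
  fixes D :: "nat \<Rightarrow> nat \<Rightarrow> 'a set"
  assumes split: "\<And>i k. k < 2 ^ i \<Longrightarrow> D i k = D (Suc i) (2 * k) \<union> D (Suc i) (2 * k + 1)"
    and split_disjoint: "\<And>i k. k < 2 ^ i \<Longrightarrow> D (Suc i) (2 * k) \<inter> D (Suc i) (2 * k + 1) = {}"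
  shows "k < 2 ^ i \<Longrightarrow> k' < 2 ^ i \<Longrightarrow> k \<noteq> k' \<Longrightarrow> D i k \<inter> D i k' = {}"
proof (induction i arbitrary: k k')
  case 0
  then show ?case by simp
next
  case (Suc i)
  show ?case
  proof (cases "k div 2 = k' div 2")
    case True
    define p where "p = k div 2"
    have p: "p < 2 ^ i" using Suc.prems by (auto simp: p_def)
    have "k = 2 * p \<and> k' = 2 * p + 1 \<or> k' = 2 * p \<and> k = 2 * p + 1"
      using True \<open>k \<noteq> k'\<close> unfolding p_def by presburger
    then show ?thesis using split_disjoint[OF p] by (auto simp: Int_commute)
  next
    case False
    then have "D i (k div 2) \<inter> D i (k' div 2) = {}"
      using Suc.prems by (intro Suc.IH) auto
    moreover have "D (Suc i) k \<subseteq> D i (k div 2)"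
      by (rule dyadic_cell_subset_parent[where D=D, OF split Suc.prems(1)])
    moreover have "D (Suc i) k' \<subseteq> D i (k' div 2)"
      by (rule dyadic_cell_subset_parent[where D=D, OF split Suc.prems(2)])
    ultimately show ?thesis by blast
  qed
qed

lemma le_dyadic_rate_of_eventually_le:
  fixes x R Cd K d :: real
  assumes d: "0 < d" and R: "x \<le> R" "0 \<le> R"
    and eventually: "N \<le> i \<Longrightarrow> x \<le> Cd * 2 powr (- (real i / d))"
    and K: "max Cd (R * 2 powr (real N / d)) \<le> K"
  shows "x \<le> K * 2 powr (- (real i / d))"
proof (cases "N \<le> i")
  case True
  then show ?thesis
    using eventually K by (meson max.boundedE mult_right_mono order_trans powr_ge_zero)
next
  case False
  have "x \<le> R * 2 powr (real N / d) * 2 powr (- (real N / d))"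
    using R by (simp add: mult.assoc flip: powr_add)
  also have "\<dots> \<le> R * 2 powr (real N / d) * 2 powr (- (real i / d))"
    using False d R(2) by (intro mult_left_mono powr_mono) (auto simp: divide_right_mono)
  also have "\<dots> \<le> K * 2 powr (- (real i / d))"
    using K by (intro mult_right_mono) auto
  finally show ?thesis .
qed

lemma power_dyadic_scale:
  assumes "0 < d"
  shows "(K * 2 powr (- (real i / real d))) ^ d = K ^ d / 2 ^ i"
proof -
  have "(2 powr (- (real i / real d))) ^ d = 2 powr (real d * (- (real i / real d)))"
    by (rule powr_power) simp
  also have "\<dots> = 2 powr (- real i)"
    using assms by simp
  also have "\<dots> = 1 / 2 ^ i"
    by (simp add: powr_minus powr_realpow divide_inverse)
  finally show ?thesis by (simp add: power_mult_distrib)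
qed

section \<open>Averages over the cells of a partition\<close>

lemma sum_indicator_disjoint_eq:
  fixes c :: "nat \<Rightarrow> 'b::semiring_1"
  assumes disj: "\<And>k k'. k < n \<Longrightarrow> k' < n \<Longrightarrow> k \<noteq> k' \<Longrightarrow> D k \<inter> D k' = {}"
    and "j < n" "x \<in> D j"
  shows "(\<Sum>k<n. c k * indicator (D k) x) = c j"
proof -
  have "(\<Sum>k<n. c k * indicator (D k) x) = (\<Sum>k\<in>{j}. c k * indicator (D k) x)"
    using assms by (intro sum.mono_neutral_right) (auto simp: disjoint_iff split: split_indicator)
  then show ?thesis using assms by simp
qed

definition cell_average :: "'a measure \<Rightarrow> 'a set \<Rightarrow> ('a \<Rightarrow> real) \<Rightarrow> real" where
  "cell_average M D f = (\<integral>x. indicator D x * f x \<partial>M) / measure M D"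

context finite_measure
begin

lemma integrable_indicator_times_square_integrable:
  fixes f :: "'a \<Rightarrow> real"
  assumes D: "D \<in> sets M" and f: "f \<in> borel_measurable M" "integrable M (\<lambda>x. (f x)\<^sup>2)"
  shows "integrable M (\<lambda>x. indicator D x :: real)"
    and "integrable M (\<lambda>x. indicator D x * f x)"
    and "integrable M (\<lambda>x. indicator D x * (f x)\<^sup>2)"
proof -
  show "integrable M (\<lambda>x. indicator D x :: real)"
    by (rule integrable_real_indicator[OF D]) (simp add: less_top[symmetric])
  show "integrable M (\<lambda>x. indicator D x * f x)"
    using integrable_mult_indicator[OF D square_integrable_imp_integrable[OF f]] by simp
  show "integrable M (\<lambda>x. indicator D x * (f x)\<^sup>2)"
    using integrable_mult_indicator[OF D f(2)] by simp
qed

lemma nn_integral_cell_pairs_square_diff: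
  fixes f :: "'a \<Rightarrow> real"
  assumes D[measurable]: "D \<in> sets M" and f[measurable]: "f \<in> borel_measurable M"
    and f2: "integrable M (\<lambda>x. (f x)\<^sup>2)"
  defines "S \<equiv> \<integral>y. indicator D y * f y \<partial>M" and "Q \<equiv> \<integral>y. indicator D y * (f y)\<^sup>2 \<partial>M"
  shows "(\<integral>\<^sup>+x. \<integral>\<^sup>+y. ennreal ((f x - f y)\<^sup>2) * indicator D x * indicator D y \<partial>M \<partial>M)
       = ennreal (2 * measure M D * Q - 2 * S\<^sup>2)"
proof -
  note int = integrable_indicator_times_square_integrable[OF D f f2]
  define m where "m = measure M D"
  define h where "h x = indicator D x * (m * (f x)\<^sup>2 - 2 * f x * S + Q)" for x
  have inner: "(\<lambda>y. indicator D x * indicator D y * (f x - f y)\<^sup>2)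
      = (\<lambda>y. (indicator D x * (f x)\<^sup>2) * indicator D y + (- 2 * indicator D x * f x) * (indicator D y * f y)
          + indicator D x * (indicator D y * (f y)\<^sup>2))" for x
    by (auto simp: power2_eq_square algebra_simps split: split_indicator)
  have inner_int: "integrable M (\<lambda>y. indicator D x * indicator D y * (f x - f y)\<^sup>2)" for x
    unfolding inner using int by simp
  have inner_val: "(\<integral>y. indicator D x * indicator D y * (f x - f y)\<^sup>2 \<partial>M) = h x" for x
  proof -
    have "(\<integral>y. indicator D x * indicator D y * (f x - f y)\<^sup>2 \<partial>M)
        = (indicator D x * (f x)\<^sup>2) * m + (- 2 * indicator D x * f x) * S + indicator D x * Q"
      unfolding inner using int by (simp add: m_def S_def Q_def)
    then show ?thesis by (simp add: h_def algebra_simps)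
  qed
  have h_lin: "h = (\<lambda>x. m * (indicator D x * (f x)\<^sup>2) + (- 2 * S) * (indicator D x * f x) + Q * indicator D x)"
    by (auto simp: h_def algebra_simps)
  have "(\<integral>\<^sup>+y. ennreal ((f x - f y)\<^sup>2) * indicator D x * indicator D y \<partial>M) = ennreal (h x)" for x
    by (subst inner_val[symmetric], subst nn_integral_eq_integral[OF inner_int, symmetric])
      (auto intro!: nn_integral_cong split: split_indicator)
  then have "(\<integral>\<^sup>+x. \<integral>\<^sup>+y. ennreal ((f x - f y)\<^sup>2) * indicator D x * indicator D y \<partial>M \<partial>M)
      = (\<integral>\<^sup>+x. ennreal (h x) \<partial>M)"
    by simp
  also have "\<dots> = ennreal (\<integral>x. h x \<partial>M)"
  proof (rule nn_integral_eq_integral)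
    show "integrable M h" unfolding h_lin using int by simp
    show "AE x in M. 0 \<le> h x"
      unfolding inner_val[symmetric] by (intro AE_I2 integral_nonneg_AE) auto
  qed
  also have "(\<integral>x. h x \<partial>M) = m * Q + (- 2 * S) * S + Q * m"
    unfolding h_lin using int by (simp add: m_def S_def Q_def)
  finally show ?thesis unfolding m_def by (simp add: power2_eq_square mult_ac)
qed

lemma cell_variance_eq_pair_integral:
  fixes f :: "'a \<Rightarrow> real"
  assumes D[measurable]: "D \<in> sets M" and m0: "0 < measure M D"
    and f[measurable]: "f \<in> borel_measurable M" and f2: "integrable M (\<lambda>x. (f x)\<^sup>2)"
  shows "ennreal (\<integral>x. indicator D x * (f x - cell_average M D f)\<^sup>2 \<partial>M)
       = ennreal (1 / (2 * measure M D)) *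
         (\<integral>\<^sup>+x. \<integral>\<^sup>+y. ennreal ((f x - f y)\<^sup>2) * indicator D x * indicator D y \<partial>M \<partial>M)"
proof -
  note int = integrable_indicator_times_square_integrable[OF D f f2]
  define m where "m = measure M D"
  define S where "S = (\<integral>y. indicator D y * f y \<partial>M)"
  define Q where "Q = (\<integral>y. indicator D y * (f y)\<^sup>2 \<partial>M)"
  define a where "a = cell_average M D f"
  have a: "a = S / m" unfolding a_def cell_average_def S_def m_def ..
  have "(\<lambda>x. indicator D x * (f x - a)\<^sup>2)
      = (\<lambda>x. indicator D x * (f x)\<^sup>2 + (- 2 * a) * (indicator D x * f x) + a\<^sup>2 * indicator D x)"
    by (auto simp: power2_eq_square algebra_simps)
  then have "(\<integral>x. indicator D x * (f x - a)\<^sup>2 \<partial>M) = Q + (- 2 * a) * S + a\<^sup>2 * m"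
    using int by (simp add: m_def S_def Q_def)
  also have "\<dots> = 1 / (2 * m) * (2 * m * Q - 2 * S\<^sup>2)"
    using m0 unfolding a m_def by (simp add: power2_eq_square field_simps)
  finally have lhs: "(\<integral>x. indicator D x * (f x - a)\<^sup>2 \<partial>M) = 1 / (2 * m) * (2 * m * Q - 2 * S\<^sup>2)" .
  have "0 \<le> 1 / (2 * m) * (2 * m * Q - 2 * S\<^sup>2)"
    unfolding lhs[symmetric] by (intro integral_nonneg_AE) auto
  then have "0 \<le> 2 * m * Q - 2 * S\<^sup>2"
    using m0 unfolding m_def by (simp add: zero_le_divide_iff)
  then show ?thesis
    unfolding a_def[symmetric] lhs nn_integral_cell_pairs_square_diff[OF D f f2]
      m_def[symmetric] S_def[symmetric] Q_def[symmetric]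
    by (rule ennreal_mult'')
qed

end

definition partition_average ::
  "'a measure \<Rightarrow> (nat \<Rightarrow> 'a set) \<Rightarrow> nat \<Rightarrow> ('a \<Rightarrow> real) \<Rightarrow> 'a \<Rightarrow> real" where
  "partition_average M D n f x = (\<Sum>k<n. cell_average M (D k) f * indicator (D k) x)"

lemma borel_measurable_partition_average:
  assumes "\<And>k. k < n \<Longrightarrow> D k \<in> sets M"
  shows "partition_average N D n f \<in> borel_measurable M"
  unfolding partition_average_def using assms
  by (intro borel_measurable_sum borel_measurable_times borel_measurable_const borel_measurable_indicator) auto

lemma abs_partition_average_le:
  "\<bar>partition_average M D n f x\<bar> \<le> (\<Sum>k<n. \<bar>cell_average M (D k) f\<bar>)"
  unfolding partition_average_def
  by (rule order_trans[OF sum_abs]) (intro sum_mono, auto split: split_indicator)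

lemma square_error_partition_average_eq:
  fixes n :: nat
  assumes disj: "\<And>k k'. k < n \<Longrightarrow> k' < n \<Longrightarrow> k \<noteq> k' \<Longrightarrow> D k \<inter> D k' = {}"
    and j: "j < n" "x \<in> D j"
  shows "(f x - partition_average M D n f x)\<^sup>2
       = (\<Sum>k<n. indicator (D k) x * (f x - cell_average M (D k) f)\<^sup>2)"
  using sum_indicator_disjoint_eq[where D=D, OF disj j, of "\<lambda>k. cell_average M (D k) f"]
    sum_indicator_disjoint_eq[where D=D, OF disj j, of "\<lambda>k. (f x - cell_average M (D k) f)\<^sup>2"]
  by (simp add: partition_average_def mult.commute)

context prob_space
begin

lemma partition_average_error_eq_cell_pairs:
  fixes f :: "'a \<Rightarrow> real" and n :: nat
  assumes D: "\<And>k. k < n \<Longrightarrow> D k \<in> events"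
    and disj: "\<And>k k'. k < n \<Longrightarrow> k' < n \<Longrightarrow> k \<noteq> k' \<Longrightarrow> D k \<inter> D k' = {}"
    and prob_D: "\<And>k. k < n \<Longrightarrow> prob (D k) = 1 / real n" and n: "0 < n"
    and f[measurable]: "f \<in> borel_measurable M" and f2: "integrable M (\<lambda>x. (f x)\<^sup>2)"
  shows "ennreal (\<integral>x. (f x - partition_average M D n f x)\<^sup>2 \<partial>M)
       = ennreal (real n / 2) *
         (\<Sum>k<n. \<integral>\<^sup>+x. \<integral>\<^sup>+y. ennreal ((f x - f y)\<^sup>2) * indicator (D k) x * indicator (D k) y \<partial>M \<partial>M)"
proof -
  define a where "a k = cell_average M (D k) f" for k
  have "prob (\<Union>k<n. D k) = (\<Sum>k<n. prob (D k))"
    by (rule finite_measure_finite_Union) (auto simp: D disjoint_family_on_def disj)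
  also have "\<dots> = 1" using prob_D n by simp
  finally have "AE x in M. x \<in> (\<Union>k<n. D k)"
    by (rule AE_prob_1)
  then have covered: "AE x in M. \<exists>j<n. x \<in> D j"
    by auto
  have cell_int: "integrable M (\<lambda>x. indicator (D k) x * (f x - a k)\<^sup>2)" if "k < n" for k
    using integrable_mult_indicator[OF D[OF that] integrable_square_diff[of f M "\<lambda>_. a k"]] f2
    by simp
  have "(\<integral>x. (f x - partition_average M D n f x)\<^sup>2 \<partial>M)
      = (\<integral>x. (\<Sum>k<n. indicator (D k) x * (f x - a k)\<^sup>2) \<partial>M)"
  proof (rule integral_cong_AE)
    show "AE x in M. (f x - partition_average M D n f x)\<^sup>2 = (\<Sum>k<n. indicator (D k) x * (f x - a k)\<^sup>2)"
      using covered
    proof eventually_elim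
      case (elim x)
      then obtain j where j: "j < n" "x \<in> D j" by blast
      show ?case unfolding a_def by (rule square_error_partition_average_eq[where D=D, OF disj j])
    qed
    show "(\<lambda>x. (f x - partition_average M D n f x)\<^sup>2) \<in> borel_measurable M"
      using borel_measurable_partition_average[of n D M M f, OF D] by measurable
    show "(\<lambda>x. \<Sum>k<n. indicator (D k) x * (f x - a k)\<^sup>2) \<in> borel_measurable M"
      using D by (intro borel_measurable_sum borel_measurable_times borel_measurable_indicator) auto
  qed
  also have "\<dots> = (\<Sum>k<n. \<integral>x. indicator (D k) x * (f x - a k)\<^sup>2 \<partial>M)"
    by (rule Bochner_Integration.integral_sum) (simp add: cell_int)
  finally have "ennreal (\<integral>x. (f x - partition_average M D n f x)\<^sup>2 \<partial>M)
      = (\<Sum>k<n. ennreal (\<integral>x. indicator (D k) x * (f x - a k)\<^sup>2 \<partial>M))"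
    by (simp add: integral_nonneg_AE sum_nonneg)
  also have "\<dots> = (\<Sum>k<n. ennreal (real n / 2) *
      (\<integral>\<^sup>+x. \<integral>\<^sup>+y. ennreal ((f x - f y)\<^sup>2) * indicator (D k) x * indicator (D k) y \<partial>M \<partial>M))"
    using n by (intro sum.cong refl)
      (simp add: a_def cell_variance_eq_pair_integral[OF D _ f f2] prob_D)
  finally show ?thesis by (simp add: sum_distrib_left)
qed

lemma real_cond_exp_partition_error_le_cell_pairs:
  fixes f :: "'a \<Rightarrow> real" and n :: nat
  assumes D: "\<And>k. k < n \<Longrightarrow> D k \<in> events"
    and disj: "\<And>k k'. k < n \<Longrightarrow> k' < n \<Longrightarrow> k \<noteq> k' \<Longrightarrow> D k \<inter> D k' = {}"
    and prob_D: "\<And>k. k < n \<Longrightarrow> prob (D k) = 1 / real n" and n: "0 < n"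
    and f[measurable]: "f \<in> borel_measurable M" and f2: "integrable M (\<lambda>x. (f x)\<^sup>2)"
  shows "ennreal (\<integral>x. (f x - real_cond_exp M (sigma (space M) (D ` {..<n})) f x)\<^sup>2 \<partial>M)
       \<le> ennreal (real n / 2) *
         (\<Sum>k<n. \<integral>\<^sup>+x. \<integral>\<^sup>+y. ennreal ((f x - f y)\<^sup>2) * indicator (D k) x * indicator (D k) y \<partial>M \<partial>M)"
proof -
  define F where "F = sigma (space M) (D ` {..<n})"
  define g where "g = partition_average M D n f"
  have cells: "D ` {..<n} \<subseteq> sets M" using D by auto
  then have sets_F: "sets F = sigma_sets (space M) (D ` {..<n})"
    unfolding F_def by (intro sets_measure_of) (auto dest: sets.sets_into_space)
  have "subalgebra M F"
    unfolding subalgebra_def sets_F using sets.sigma_sets_subset[OF cells] by (simp add: F_def space_measure_of_conv)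
  then interpret F: finite_measure_subalgebra M F
    by (intro finite_measure_subalgebra.intro finite_measure_axioms finite_measure_subalgebra_axioms.intro)
  have gF: "g \<in> borel_measurable F"
    unfolding g_def by (rule borel_measurable_partition_average) (simp add: sets_F)
  have gM: "g \<in> borel_measurable M"
    by (rule measurable_from_subalg[OF F.subalg gF])
  have g2: "integrable M (\<lambda>x. (g x)\<^sup>2)"
  proof (rule integrable_const_bound[where B="(\<Sum>k<n. \<bar>cell_average M (D k) f\<bar>)\<^sup>2"])
    show "AE x in M. norm ((g x)\<^sup>2) \<le> (\<Sum>k<n. \<bar>cell_average M (D k) f\<bar>)\<^sup>2"
    proof (intro AE_I2)
      fix x
      have "\<bar>g x\<bar>\<^sup>2 \<le> (\<Sum>k<n. \<bar>cell_average M (D k) f\<bar>)\<^sup>2"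
        unfolding g_def by (intro power_mono abs_partition_average_le) simp
      then show "norm ((g x)\<^sup>2) \<le> (\<Sum>k<n. \<bar>cell_average M (D k) f\<bar>)\<^sup>2" by simp
    qed
    show "(\<lambda>x. (g x)\<^sup>2) \<in> borel_measurable M"
      using gM by measurable
  qed
  have "(\<integral>x. (f x - real_cond_exp M F f x)\<^sup>2 \<partial>M) \<le> (\<integral>x. (f x - g x)\<^sup>2 \<partial>M)"
    using square_integrable_imp_integrable[OF f f2] f2 gF g2 by (rule F.real_cond_exp_L2_optimal)
  then have "ennreal (\<integral>x. (f x - real_cond_exp M F f x)\<^sup>2 \<partial>M) \<le> ennreal (\<integral>x. (f x - g x)\<^sup>2 \<partial>M)"
    by (rule ennreal_leI)
  also have "\<dots> = ennreal (real n / 2) *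
      (\<Sum>k<n. \<integral>\<^sup>+x. \<integral>\<^sup>+y. ennreal ((f x - f y)\<^sup>2) * indicator (D k) x * indicator (D k) y \<partial>M \<partial>M)"
    unfolding g_def by (rule partition_average_error_eq_cell_pairs[OF D disj prob_D n f f2])
  finally show ?thesis unfolding F_def .
qed

end

section \<open>Pair integrals near the diagonal\<close>

lemma sum_cell_pair_integrals_le_near_diagonal:
  fixes f :: "'a::metric_space \<Rightarrow> real" and D :: "nat \<Rightarrow> 'a set"
  assumes M: "sigma_finite_measure M"
    and D: "\<And>k. k < n \<Longrightarrow> D k \<in> sets M" and sub: "\<And>k. k < n \<Longrightarrow> D k \<subseteq> S"
    and disj: "\<And>k k'. k < n \<Longrightarrow> k' < n \<Longrightarrow> k \<noteq> k' \<Longrightarrow> D k \<inter> D k' = {}"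
    and diam: "\<And>k x y. k < n \<Longrightarrow> x \<in> D k \<Longrightarrow> y \<in> D k \<Longrightarrow> dist x y \<le> h"
    and f[measurable]: "f \<in> borel_measurable M"
  shows "(\<Sum>k<n. \<integral>\<^sup>+x. \<integral>\<^sup>+y. ennreal ((f x - f y)\<^sup>2) * indicator (D k) x * indicator (D k) y \<partial>M \<partial>M)
       \<le> (\<integral>\<^sup>+x. \<integral>\<^sup>+y. ennreal ((f x - f y)\<^sup>2) * indicator S x * indicator S y
                         * indicator {..h} (dist x y) \<partial>M \<partial>M)"
proof -
  interpret sigma_finite_measure M by (rule M)
  define T where "T k x y = ennreal ((f x - f y)\<^sup>2) * indicator (D k) x * indicator (D k) y" for k x y
  have pointwise: "(\<Sum>k<n. T k x y)
      \<le> ennreal ((f x - f y)\<^sup>2) * indicator S x * indicator S y * indicator {..h} (dist x y)" for x y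
  proof (cases "\<exists>j<n. x \<in> D j \<and> y \<in> D j")
    case True
    then obtain j where j: "j < n" "x \<in> D j" "y \<in> D j" by blast
    have "(\<Sum>k<n. T k x y) = (\<Sum>k<n. (ennreal ((f x - f y)\<^sup>2) * indicator (D k) y) * indicator (D k) x)"
      unfolding T_def by (simp add: mult_ac)
    also have "\<dots> = ennreal ((f x - f y)\<^sup>2) * indicator (D j) y"
      by (rule sum_indicator_disjoint_eq[where D=D, OF disj j(1,2)])
    moreover have "x \<in> S" "y \<in> S" using j sub[OF j(1)] by auto
    ultimately show ?thesis
      using j diam[OF j] by simp
  next
    case False
    then have "(\<Sum>k<n. T k x y) = 0"
      unfolding T_def by (intro sum.neutral) (auto split: split_indicator)
    then show ?thesis by simp
  qed
  have T_meas: "(\<lambda>(x, y). T k x y) \<in> borel_measurable (M \<Otimes>\<^sub>M M)" if "k < n" for k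
    using D[OF that] unfolding T_def by measurable
  have "(\<Sum>k<n. \<integral>\<^sup>+x. \<integral>\<^sup>+y. T k x y \<partial>M \<partial>M) = (\<integral>\<^sup>+x. (\<Sum>k<n. \<integral>\<^sup>+y. T k x y \<partial>M) \<partial>M)"
    using borel_measurable_nn_integral[OF T_meas] by (intro nn_integral_sum[symmetric]) simp
  also have "\<dots> = (\<integral>\<^sup>+x. \<integral>\<^sup>+y. (\<Sum>k<n. T k x y) \<partial>M \<partial>M)"
    using measurable_Pair2[OF T_meas]
    by (intro nn_integral_cong nn_integral_sum[symmetric]) simp
  also have "\<dots> \<le> (\<integral>\<^sup>+x. \<integral>\<^sup>+y. ennreal ((f x - f y)\<^sup>2) * indicator S x * indicator S y
                         * indicator {..h} (dist x y) \<partial>M \<partial>M)"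
    by (intro nn_integral_mono pointwise)
  finally show ?thesis unfolding T_def .
qed

lemma nn_integral_pairs_density_le:
  fixes p :: "'a \<Rightarrow> real" and W :: "'a \<Rightarrow> 'a \<Rightarrow> ennreal"
  assumes M: "sigma_finite_measure M" and p[measurable]: "p \<in> borel_measurable M"
    and bound: "\<And>v. v \<in> S \<Longrightarrow> p v \<le> C" and C: "0 \<le> C"
    and W[measurable]: "(\<lambda>(x, y). W x y) \<in> borel_measurable (M \<Otimes>\<^sub>M M)"
    and supported: "\<And>x y. W x y \<noteq> 0 \<Longrightarrow> x \<in> S \<and> y \<in> S"
  shows "(\<integral>\<^sup>+x. \<integral>\<^sup>+y. W x y \<partial>density M (\<lambda>v. ennreal (p v)) \<partial>density M (\<lambda>v. ennreal (p v)))
       \<le> ennreal (C * C) * (\<integral>\<^sup>+x. \<integral>\<^sup>+y. W x y \<partial>M \<partial>M)"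
proof -
  interpret sigma_finite_measure M by (rule M)
  have W_x: "W x \<in> borel_measurable M" if "x \<in> space M" for x
    using measurable_Pair2[OF W that] by simp
  have pW[measurable]: "(\<lambda>(x, y). ennreal (p y) * W x y) \<in> borel_measurable (M \<Otimes>\<^sub>M M)"
    by measurable
  have "(\<integral>\<^sup>+x. \<integral>\<^sup>+y. W x y \<partial>density M (\<lambda>v. ennreal (p v)) \<partial>density M (\<lambda>v. ennreal (p v)))
      = (\<integral>\<^sup>+x. \<integral>\<^sup>+y. ennreal (p y) * W x y \<partial>M \<partial>density M (\<lambda>v. ennreal (p v)))"
    using W_x by (intro nn_integral_cong) (simp add: nn_integral_density)
  also have "\<dots> = (\<integral>\<^sup>+x. ennreal (p x) * (\<integral>\<^sup>+y. ennreal (p y) * W x y \<partial>M) \<partial>M)"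
    using borel_measurable_nn_integral[OF pW] by (simp add: nn_integral_density)
  also have "\<dots> \<le> (\<integral>\<^sup>+x. ennreal (C * C) * (\<integral>\<^sup>+y. W x y \<partial>M) \<partial>M)"
  proof (intro nn_integral_mono)
    fix x assume x: "x \<in> space M"
    have "ennreal (p x) * ennreal (p y) * W x y \<le> ennreal (C * C) * W x y" for y
    proof (cases "W x y = 0")
      case False
      then have "p x \<le> C" "p y \<le> C" using supported bound by blast+
      then have "ennreal (p x) * ennreal (p y) \<le> ennreal C * ennreal C"
        by (intro mult_mono ennreal_leI) auto
      then have "ennreal (p x) * ennreal (p y) \<le> ennreal (C * C)"
        using C by (simp add: ennreal_mult)
      then show ?thesis by (rule mult_right_mono) simp
    qed simp
    then have "(\<integral>\<^sup>+y. ennreal (p x) * (ennreal (p y) * W x y) \<partial>M) \<le> (\<integral>\<^sup>+y. ennreal (C * C) * W x y \<partial>M)"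
      by (intro nn_integral_mono) (simp add: mult.assoc)
    then show "ennreal (p x) * (\<integral>\<^sup>+y. ennreal (p y) * W x y \<partial>M) \<le> ennreal (C * C) * (\<integral>\<^sup>+y. W x y \<partial>M)"
      using W_x[OF x] by (simp add: nn_integral_cmult)
  qed
  also have "\<dots> = ennreal (C * C) * (\<integral>\<^sup>+x. \<integral>\<^sup>+y. W x y \<partial>M \<partial>M)"
    using borel_measurable_nn_integral[OF W] by (simp add: nn_integral_cmult)
  finally show ?thesis .
qed

lemma emeasure_cball_le:
  assumes "0 \<le> h"
  shows "emeasure lborel (cball (0::'a::euclidean_space) h) \<le> ennreal ((2 * h) ^ DIM('a))"
proof -
  have "cball (0::'a) h \<subseteq> cbox (- (h *\<^sub>R One)) (h *\<^sub>R One)"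
  proof
    fix s :: 'a assume "s \<in> cball 0 h"
    then have "- h \<le> s \<bullet> b \<and> s \<bullet> b \<le> h" if "b \<in> Basis" for b
      using Basis_le_norm[OF that, of s] by (auto simp: abs_le_iff)
    then show "s \<in> cbox (- (h *\<^sub>R One)) (h *\<^sub>R One)"
      by (auto simp: mem_box)
  qed
  then have "emeasure lborel (cball (0::'a) h) \<le> emeasure lborel (cbox (- (h *\<^sub>R One)) (h *\<^sub>R (One::'a)))"
    by (rule emeasure_mono) simp
  also have "\<dots> = ennreal ((2 * h) ^ DIM('a))"
    using assms by (simp add: emeasure_lborel_cbox_eq inner_diff_left inner_add_left prod_constant)
  finally show ?thesis .
qed

lemma near_diagonal_integral_le_shift_modulus:
  fixes f :: "'a::euclidean_space \<Rightarrow> real"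
  assumes f[measurable]: "f \<in> borel_measurable borel" and S[measurable]: "S \<in> sets borel"
  shows "(\<integral>\<^sup>+x. \<integral>\<^sup>+y. ennreal ((f x - f y)\<^sup>2) * indicator S x * indicator S y
                         * indicator {..h} (dist x y) \<partial>lborel \<partial>lborel)
    \<le> emeasure lborel (cball (0::'a) h) *
       (SUP s\<in>{s. norm s \<le> h}. \<integral>\<^sup>+ v. ennreal ((f (v + s) - f v)\<^sup>2)
                                        * indicator (S \<inter> {v. v + s \<in> S}) v \<partial>lborel)"
  (is "?lhs \<le> _ * ?modulus")
proof -
  define W where "W x y = ennreal ((f x - f y)\<^sup>2) * indicator S x * indicator S y * indicator {..h} (dist x y)" for x y
  define \<Phi> where "\<Phi> s = (\<integral>\<^sup>+ v. ennreal ((f (v + s) - f v)\<^sup>2) * indicator (S \<inter> {v. v + s \<in> S}) v \<partial>lborel)" for s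
  have W_meas[measurable]: "W x \<in> borel_measurable borel" for x
    unfolding W_def by measurable
  have shift: "(\<integral>\<^sup>+y. W x y \<partial>lborel) = (\<integral>\<^sup>+s. W x (x + s) \<partial>lborel)" for x
  proof -
    have "(\<integral>\<^sup>+y. W x y \<partial>lborel) = (\<integral>\<^sup>+y. W x y \<partial>distr lborel borel ((+) x))"
      by (simp add: lborel_distr_plus)
    also have "\<dots> = (\<integral>\<^sup>+s. W x (x + s) \<partial>lborel)"
      by (subst nn_integral_distr) (auto simp: W_def)
    finally show ?thesis .
  qed
  have swap: "(\<integral>\<^sup>+x. \<integral>\<^sup>+s. W x (x + s) \<partial>lborel \<partial>lborel) = (\<integral>\<^sup>+s. \<integral>\<^sup>+x. W x (x + s) \<partial>lborel \<partial>lborel)"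
    by (rule lborel_pair.Fubini') (simp add: W_def)
  have slice: "(\<integral>\<^sup>+x. W x (x + s) \<partial>lborel) = indicator (cball 0 h) s * \<Phi> s" for s
  proof -
    have "(\<integral>\<^sup>+x. W x (x + s) \<partial>lborel)
        = (\<integral>\<^sup>+x. indicator (cball 0 h) s * (ennreal ((f (x + s) - f x)\<^sup>2) * indicator (S \<inter> {v. v + s \<in> S}) x) \<partial>lborel)"
      by (intro nn_integral_cong) (auto simp: W_def dist_norm power2_commute split: split_indicator)
    also have "\<dots> = indicator (cball 0 h) s * \<Phi> s"
      unfolding \<Phi>_def by (rule nn_integral_cmult) measurable
    finally show ?thesis .
  qed
  have pointwise: "indicator (cball 0 h) s * \<Phi> s \<le> indicator (cball 0 h) s * ?modulus" for s
    unfolding \<Phi>_def by (cases "s \<in> cball 0 h") (auto intro!: SUP_upper)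
  have "?lhs = (\<integral>\<^sup>+s. indicator (cball 0 h) s * \<Phi> s \<partial>lborel)"
    unfolding W_def[symmetric] shift swap slice ..
  also have "\<dots> \<le> (\<integral>\<^sup>+s. indicator (cball (0::'a) h) s * ?modulus \<partial>lborel)"
    by (intro nn_integral_mono pointwise)
  also have "\<dots> = emeasure lborel (cball (0::'a) h) * ?modulus"
    using nn_integral_cmult_indicator[of "cball (0::'a) h" lborel ?modulus] by (simp add: mult.commute)
  finally show ?thesis .
qed

lemma dist_le_of_image_cbox:
  fixes T :: "'a::euclidean_space \<Rightarrow> 'b::real_normed_vector"
  assumes S: "S \<subseteq> T ` cbox a b"
    and deriv: "\<And>u. u \<in> cbox a b \<Longrightarrow> (T has_derivative blinfun_apply (T' u)) (at u within cbox a b)"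
    and bound: "\<And>u. u \<in> cbox a b \<Longrightarrow> norm (T' u) \<le> B"
    and v: "v \<in> S" "v' \<in> S"
  shows "dist v v' \<le> B * dist a b"
proof -
  obtain u u' where u: "u \<in> cbox a b" "u' \<in> cbox a b" and v_eq: "v = T u" "v' = T u'"
    using S v by blast
  have "norm (T u - T u') \<le> B * norm (u - u')"
    using deriv bound u by (intro differentiable_bound[OF convex_box(1)]) (auto simp flip: norm_blinfun.rep_eq)
  moreover have "0 \<le> B" using bound[OF u(1)] norm_ge_zero order_trans by blast
  moreover have "dist u u' \<le> dist a b"
  proof -
    have "\<forall>i\<in>Basis. a \<bullet> i \<le> b \<bullet> i" using u(1) box_ne_empty(1) by blast
    then show ?thesis
      using diameter_bounded_bound[OF bounded_cbox u] diameter_cbox by metis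
  qed
  ultimately show ?thesis
    unfolding v_eq by (metis dist_norm mult_left_mono order_trans)
qed

lemma real_cond_exp_partition_error_le_int_mod_sq:
  fixes P :: "'a::euclidean_space measure" and f :: "'a \<Rightarrow> real" and n :: nat
  assumes P: "prob_space P" "P = density lborel (\<lambda>v. ennreal (p v))"
    and p[measurable]: "p \<in> borel_measurable borel"
    and p_le: "\<And>v. v \<in> supp P \<Longrightarrow> p v \<le> C" and C: "0 \<le> C"
    and supp[measurable]: "supp P \<in> sets borel"
    and D: "\<And>k. k < n \<Longrightarrow> D k \<in> sets (completion P)" "\<And>k. k < n \<Longrightarrow> D k \<subseteq> supp P"
    and disj: "\<And>k k'. k < n \<Longrightarrow> k' < n \<Longrightarrow> k \<noteq> k' \<Longrightarrow> D k \<inter> D k' = {}"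
    and prob_D: "\<And>k. k < n \<Longrightarrow> measure (completion P) (D k) = 1 / real n" and n: "0 < n"
    and diam: "\<And>k x y. k < n \<Longrightarrow> x \<in> D k \<Longrightarrow> y \<in> D k \<Longrightarrow> dist x y \<le> h" and h: "0 \<le> h"
    and f[measurable]: "f \<in> borel_measurable borel" and f2: "integrable P (\<lambda>v. (f v)\<^sup>2)"
  shows "ennreal (\<integral>v. (f v - real_cond_exp (completion P)
                    (sigma (space (completion P)) (D ` {..<n})) f v)\<^sup>2 \<partial>completion P)
       \<le> ennreal (real n / 2 * C\<^sup>2 * (2 * h) ^ DIM('a)) * int_mod_sq f h P"
proof -
  define W where "W x y = ennreal ((f x - f y)\<^sup>2) * indicator (supp P) x * indicator (supp P) y
                          * indicator {..h} (dist x y)" for x y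
  interpret P: prob_space P by (rule P(1))
  interpret M: prob_space "completion P" by (rule P.prob_space_completion)
  have sets_P: "sets P = sets borel" using P(2) by simp
  have fP[measurable]: "f \<in> borel_measurable P"
    unfolding measurable_cong_sets[OF sets_P refl] by (rule f)
  have fM[measurable]: "f \<in> borel_measurable (completion P)"
    by (rule measurable_completion[OF fP])
  have f2M: "integrable (completion P) (\<lambda>v. (f v)\<^sup>2)"
    using integrable_completion[of "\<lambda>v. (f v)\<^sup>2" P] f2 by simp
  have W_meas: "(\<lambda>(x, y). W x y) \<in> borel_measurable (lborel \<Otimes>\<^sub>M lborel)"
    unfolding W_def by measurable
  have "ennreal (\<integral>v. (f v - real_cond_exp (completion P) (sigma (space (completion P)) (D ` {..<n})) f v)\<^sup>2 \<partial>completion P)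
      \<le> ennreal (real n / 2) *
        (\<Sum>k<n. \<integral>\<^sup>+x. \<integral>\<^sup>+y. ennreal ((f x - f y)\<^sup>2) * indicator (D k) x * indicator (D k) y \<partial>completion P \<partial>completion P)"
    using D(1) disj prob_D n fM f2M by (rule M.real_cond_exp_partition_error_le_cell_pairs)
  also have "\<dots> \<le> ennreal (real n / 2) * (\<integral>\<^sup>+x. \<integral>\<^sup>+y. W x y \<partial>completion P \<partial>completion P)"
    unfolding W_def using M.sigma_finite_measure_axioms D disj diam fM
    by (intro mult_left_mono sum_cell_pair_integrals_le_near_diagonal) auto
  also have "\<dots> = ennreal (real n / 2) * (\<integral>\<^sup>+x. \<integral>\<^sup>+y. W x y \<partial>P \<partial>P)"
    by (simp only: nn_integral_completion)
  also have "\<dots> \<le> ennreal (real n / 2) * (ennreal (C * C) * (\<integral>\<^sup>+x. \<integral>\<^sup>+y. W x y \<partial>lborel \<partial>lborel))"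
    unfolding P(2)
    by (intro mult_left_mono nn_integral_pairs_density_le[OF lborel.sigma_finite_measure_axioms _ p_le C W_meas])
      (auto simp: W_def indicator_eq_0_iff)
  also have "\<dots> \<le> ennreal (real n / 2) * (ennreal (C * C) * (emeasure lborel (cball (0::'a) h) * int_mod_sq f h P))"
    unfolding W_def int_mod_sq_def
    by (intro mult_left_mono near_diagonal_integral_le_shift_modulus[OF f supp]) simp_all
  also have "\<dots> \<le> ennreal (real n / 2) * (ennreal (C * C) * (ennreal ((2 * h) ^ DIM('a)) * int_mod_sq f h P))"
    by (intro mult_left_mono mult_right_mono emeasure_cball_le[OF h]) simp_all
  also have "ennreal (real n / 2) * (ennreal (C * C) * (ennreal ((2 * h) ^ DIM('a)) * int_mod_sq f h P))
      = ennreal (real n / 2 * C\<^sup>2 * (2 * h) ^ DIM('a)) * int_mod_sq f h P"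
  proof -
    have "real n / 2 * C\<^sup>2 * (2 * h) ^ DIM('a) = real n / 2 * (C * C * (2 * h) ^ DIM('a))"
      by (simp add: power2_eq_square)
    then have "ennreal (real n / 2 * C\<^sup>2 * (2 * h) ^ DIM('a))
        = ennreal (real n / 2) * (ennreal (C * C) * ennreal ((2 * h) ^ DIM('a)))"
      by (simp only: ennreal_mult'[of "real n / 2"] ennreal_mult'[of "C * C"] zero_le_square of_nat_0_le_iff
          divide_nonneg_pos zero_less_numeral)
    then show ?thesis by (simp only: mult.assoc)
  qed
  finally show ?thesis .
qed

lemma real_cond_exp_dyadic_error_le_int_mod_sq:
  fixes P :: "'a::euclidean_space measure" and \<Delta> :: "nat \<Rightarrow> nat \<Rightarrow> 'a set" and f :: "'a \<Rightarrow> real"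
  assumes P: "prob_space P" "P = density lborel (\<lambda>v. ennreal (p v))"
    and p: "p \<in> borel_measurable borel" and p_le: "\<And>v. v \<in> supp P \<Longrightarrow> p v \<le> C" and C: "0 \<le> C"
    and supp: "supp P \<in> sets borel"
    and supp_diam: "\<And>v v'. v \<in> supp P \<Longrightarrow> v' \<in> supp P \<Longrightarrow> dist v v' \<le> R" and R: "0 \<le> R"
    and meas: "\<And>k. k < 2 ^ i \<Longrightarrow> \<Delta> i k \<in> sets (completion P)"
    and root: "\<Delta> 0 0 = supp P"
    and split: "\<And>j k. k < 2 ^ j \<Longrightarrow> \<Delta> j k = \<Delta> (Suc j) (2 * k) \<union> \<Delta> (Suc j) (2 * k + 1)
                       \<and> \<Delta> (Suc j) (2 * k) \<inter> \<Delta> (Suc j) (2 * k + 1) = {}"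
    and prob: "\<And>k. k < 2 ^ i \<Longrightarrow> measure (completion P) (\<Delta> i k) = 1 / 2 ^ i"
    and diam_eventually: "\<And>k v v'. N \<le> i \<Longrightarrow> k < 2 ^ i \<Longrightarrow> v \<in> \<Delta> i k \<Longrightarrow> v' \<in> \<Delta> i k \<Longrightarrow>
                          dist v v' \<le> Cd * 2 powr (- (real i / DIM('a)))"
    and K: "max Cd (R * 2 powr (real N / DIM('a))) \<le> K"
    and f: "f \<in> borel_measurable borel" "integrable P (\<lambda>v. (f v)\<^sup>2)"
  shows "ennreal (\<integral>v. (f v - real_cond_exp (completion P)
                    (sigma (space (completion P)) (\<Delta> i ` {..<2 ^ i})) f v)\<^sup>2 \<partial>completion P)
       \<le> ennreal (C\<^sup>2 * (2 * K) ^ DIM('a) / 2) * int_mod_sq f (K * 2 powr (- (real i / DIM('a)))) P"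
proof -
  have split_union: "\<And>j k. k < 2 ^ j \<Longrightarrow> \<Delta> j k = \<Delta> (Suc j) (2 * k) \<union> \<Delta> (Suc j) (2 * k + 1)"
    using split by (rule conjunct1)
  have split_disjoint: "\<And>j k. k < 2 ^ j \<Longrightarrow> \<Delta> (Suc j) (2 * k) \<inter> \<Delta> (Suc j) (2 * k + 1) = {}"
    using split by (rule conjunct2)
  have K_nonneg: "0 \<le> K"
    using K order_trans[OF mult_nonneg_nonneg[OF R powr_ge_zero]] by auto
  have cell_supp: "\<And>k. k < 2 ^ i \<Longrightarrow> \<Delta> i k \<subseteq> supp P"
    by (rule dyadic_cell_subset_root[where D=\<Delta>, OF root split_union])
  have cell_diam: "dist v v' \<le> K * 2 powr (- (real i / DIM('a)))"
    if "k < 2 ^ i" "v \<in> \<Delta> i k" "v' \<in> \<Delta> i k" for k v v'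
    using that cell_supp[OF that(1)]
    by (intro le_dyadic_rate_of_eventually_le[OF _ _ R _ K] supp_diam diam_eventually) auto
  have "ennreal (\<integral>v. (f v - real_cond_exp (completion P)
                    (sigma (space (completion P)) (\<Delta> i ` {..<2 ^ i})) f v)\<^sup>2 \<partial>completion P)
      \<le> ennreal (real (2 ^ i) / 2 * C\<^sup>2 * (2 * (K * 2 powr (- (real i / DIM('a))))) ^ DIM('a))
         * int_mod_sq f (K * 2 powr (- (real i / DIM('a)))) P"
    using dyadic_cells_disjoint[where D=\<Delta>, OF split_union split_disjoint] prob cell_diam K_nonneg
    by (intro real_cond_exp_partition_error_le_int_mod_sq[OF P p p_le C supp meas cell_supp _ _ _ _ _ f])
      auto
  also have "real (2 ^ i) / 2 * C\<^sup>2 * (2 * (K * 2 powr (- (real i / DIM('a))))) ^ DIM('a)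
      = C\<^sup>2 * (2 * K) ^ DIM('a) / 2"
    by (simp add: power_dyadic_scale flip: mult.assoc)
  finally show ?thesis .
qed

theorem lemmaG2:
  fixes PP :: "(real ^ 'n) measure set"
    and \<Delta> :: "(real ^ 'n) measure \<Rightarrow> nat \<Rightarrow> nat \<Rightarrow> (real ^ 'n) set"
  assumes distr: "\<And>P. P \<in> PP \<Longrightarrow> prob_space P \<and> sets P = sets borel"
    and abs_cont: "\<And>P. P \<in> PP \<Longrightarrow> absolutely_continuous lborel P"
    and compact_supp: "\<And>P. P \<in> PP \<Longrightarrow> compact (supp P)"
    and dens: "\<exists>c C. 0 < c \<and> (\<forall>P\<in>PP. \<exists>p. p \<in> borel_measurable borel \<and> (\<forall>v. 0 \<le> p v)
                 \<and> P = density lborel (\<lambda>v. ennreal (p v))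
                 \<and> (\<forall>v\<in>supp P. c \<le> p v \<and> p v \<le> C))"
    and G2: "\<exists>cJ CT. 0 < cJ \<and> (\<forall>P\<in>PP. \<exists>(T :: real ^ 'n \<Rightarrow> real ^ 'n) (T' :: real ^ 'n \<Rightarrow> ((real ^ 'n) \<Rightarrow>\<^sub>L (real ^ 'n))).
                 bij_betw T (cbox 0 One) (supp P)
               \<and> (\<forall>v\<in>cbox 0 One. (T has_derivative blinfun_apply (T' v)) (at v within cbox 0 One))
               \<and> continuous_on (cbox 0 One) T'
               \<and> (\<forall>v\<in>cbox 0 One. cJ \<le> \<bar>det (matrix (blinfun_apply (T' v)))\<bar> \<and> norm (T' v) \<le> CT))"
    and part_meas: "\<And>P i k. P \<in> PP \<Longrightarrow> k < 2 ^ i \<Longrightarrow> \<Delta> P i k \<in> sets (completion P)"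
    and part_root: "\<And>P. P \<in> PP \<Longrightarrow> \<Delta> P 0 0 = supp P"
    and part_split: "\<And>P i k. P \<in> PP \<Longrightarrow> k < 2 ^ i \<Longrightarrow>
           \<Delta> P i k = \<Delta> P (Suc i) (2 * k) \<union> \<Delta> P (Suc i) (2 * k + 1)
         \<and> \<Delta> P (Suc i) (2 * k) \<inter> \<Delta> P (Suc i) (2 * k + 1) = {}"
    and part_prob: "\<And>P i k. P \<in> PP \<Longrightarrow> k < 2 ^ i \<Longrightarrow>
           measure (completion P) (\<Delta> P i k) = 1 / 2 ^ i"
    and part_diam: "\<exists>C N. \<forall>i\<ge>N. \<forall>P\<in>PP. \<forall>k<2 ^ i. \<forall>v\<in>\<Delta> P i k. \<forall>v'\<in>\<Delta> P i k.
           dist v v' \<le> C * 2 powr (- (real i / real CARD('n)))"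
    and part_gen: "\<And>P. P \<in> PP \<Longrightarrow>
           completed_sigma P (\<Union>i. \<Delta> P i ` {..<2 ^ i}) = sets (completion P)"
  shows "\<exists>K0 K1. 0 < K0 \<and> 0 < K1 \<and>
    (\<forall>P\<in>PP. \<forall>i::nat. \<forall>f :: real ^ 'n \<Rightarrow> real.
       (f \<in> borel_measurable borel \<and> (\<forall>Q\<in>PP. integrable Q (\<lambda>v. (f v)\<^sup>2))) \<longrightarrow>
       ennreal (\<integral>v. (f v - real_cond_exp (completion P)
                     (sigma (space (completion P)) (\<Delta> P i ` {..<2 ^ i})) f v)\<^sup>2 \<partial>completion P)
       \<le> ennreal K0 * int_mod_sq f (K1 * 2 powr (- (real i / real CARD('n)))) P)"
proof -
  obtain C where dens_le: "\<forall>P\<in>PP. \<exists>p. p \<in> borel_measurable borel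
      \<and> P = density lborel (\<lambda>v. ennreal (p v)) \<and> (\<forall>v\<in>supp P. p v \<le> C)"
    using dens by fast
  obtain CT where param: "\<forall>P\<in>PP. \<exists>(T :: real ^ 'n \<Rightarrow> real ^ 'n) T'. bij_betw T (cbox 0 One) (supp P)
       \<and> (\<forall>v\<in>cbox 0 One. (T has_derivative blinfun_apply (T' v)) (at v within cbox 0 One))
       \<and> (\<forall>v\<in>cbox 0 One. norm (T' v) \<le> CT)"
    using G2 by fast
  obtain Cd N where diam_eventually: "\<forall>i\<ge>N. \<forall>P\<in>PP. \<forall>k<2 ^ i. \<forall>v\<in>\<Delta> P i k. \<forall>v'\<in>\<Delta> P i k.
      dist v v' \<le> Cd * 2 powr (- (real i / real CARD('n)))"
    using part_diam by blast
  define R where "R = max CT 0 * dist (0::real ^ 'n) One"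
  define K1 where "K1 = max (max Cd (R * 2 powr (real N / real CARD('n)))) 1"
  have supp_diam: "dist v v' \<le> R" if P: "P \<in> PP" and v: "v \<in> supp P" "v' \<in> supp P" for P v v'
  proof -
    obtain T :: "real ^ 'n \<Rightarrow> real ^ 'n" and T' where T: "bij_betw T (cbox 0 One) (supp P)"
      "\<forall>u\<in>cbox 0 One. (T has_derivative blinfun_apply (T' u)) (at u within cbox 0 One)"
      "\<forall>u\<in>cbox 0 One. norm (T' u) \<le> CT"
      using param P by blast
    have "supp P \<subseteq> T ` cbox 0 One" using bij_betw_imp_surj_on[OF T(1)] by simp
    moreover have "norm (T' u) \<le> max CT 0" if "u \<in> cbox 0 One" for u
      using T(3) that by (simp add: le_max_iff_disj)
    ultimately show ?thesis
      unfolding R_def using T(2) v by (intro dist_le_of_image_cbox) auto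
  qed
  show ?thesis
  proof (intro exI conjI ballI allI impI)
    fix P i and f :: "real ^ 'n \<Rightarrow> real"
    assume P: "P \<in> PP" and f: "f \<in> borel_measurable borel \<and> (\<forall>Q\<in>PP. integrable Q (\<lambda>v. (f v)\<^sup>2))"
    obtain p where p: "p \<in> borel_measurable borel" "P = density lborel (\<lambda>v. ennreal (p v))"
      "\<forall>v\<in>supp P. p v \<le> C"
      using dens_le P by blast
    have "ennreal (\<integral>v. (f v - real_cond_exp (completion P)
                     (sigma (space (completion P)) (\<Delta> P i ` {..<2 ^ i})) f v)\<^sup>2 \<partial>completion P)
       \<le> ennreal ((max C 1)\<^sup>2 * (2 * K1) ^ DIM(real ^ 'n) / 2)
          * int_mod_sq f (K1 * 2 powr (- (real i / DIM(real ^ 'n)))) P"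
    proof (rule real_cond_exp_dyadic_error_le_int_mod_sq[OF _ p(2,1) _ _ _ supp_diam[OF P] _ part_meas[OF P]
          part_root[OF P] part_split[OF P] part_prob[OF P]])
      show "prob_space P" using distr[OF P] by blast
      show "p v \<le> max C 1" if "v \<in> supp P" for v using p(3) that by (simp add: le_max_iff_disj)
      show "supp P \<in> sets borel" using compact_supp[OF P] by (rule compact_imp_closed[THEN borel_closed])
      show "N \<le> i \<Longrightarrow> k < 2 ^ i \<Longrightarrow> v \<in> \<Delta> P i k \<Longrightarrow> v' \<in> \<Delta> P i k \<Longrightarrow>
          dist v v' \<le> Cd * 2 powr (- (real i / DIM(real ^ 'n)))" for k v v'
        using diam_eventually P by simp
      show "f \<in> borel_measurable borel" "integrable P (\<lambda>v. (f v)\<^sup>2)" using f P by blast+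
    qed (simp_all add: K1_def R_def)
    then show "ennreal (\<integral>v. (f v - real_cond_exp (completion P)
                     (sigma (space (completion P)) (\<Delta> P i ` {..<2 ^ i})) f v)\<^sup>2 \<partial>completion P)
       \<le> ennreal ((max C 1)\<^sup>2 * (2 * K1) ^ CARD('n) / 2) * int_mod_sq f (K1 * 2 powr (- (real i / real CARD('n)))) P"
      by (simp only: DIM_cart DIM_real mult_1_right)
  qed (auto simp: K1_def)
qed

end
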